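(* Let $(H,k,\chi)$ be an instance of Precoloring Extension with $H=(V,F)$, $V=\{1,\dots,n\}$, $H$ having at least one edge. Construct a $P_n\,|\,\mathrm{conc}\,|\,C_{\max}$ instance as follows: jobs $1,\dots,n$ with $p_j=1$ and conflict graph initially $G=H$; jobs $a,b$ with $p_a=p_b=1$ and jobs $a',b'$ with $p_{a'}=p_{b'}=k-1$, with conflict edges $\{a,a'\},\{b,b'\},\{a,b\}$; for each $j\in V_0$ with $\chi(j)\in\{2,\dots,k-1\}$, jobs $j(1),j(2)$ with $p_{j(1)}=\chi(j)-1$, $p_{j(2)}=k-\chi(j)$ and conflict edges $\{j,j(1)\},\{j,j(2)\},\{j(1),j(2)\},\{a,j\},\{b,j\},\{a,j(2)\},\{b,j(1)\}$; for each $j\in V_0$ with $\chi(j)=1$, a job $j(2)$ with $p_{j(2)}=k-1$ and conflict edges $\{j,j(2)\},\{b,j\},\{a,j(2)\}$; for each $j\in V_0$ with $\chi(j)=k$, a job $j(1)$ with $p_{j(1)}=k-1$ and conflict edges $\{j,j(1)\},\{a,j\},\{b,j(1)\}$. If the constructed instance has a feasible schedule $C$ with $C_{\max}\le k$, then $(H,k,\chi)$ has a solution $\chi':\{1,\dots,n\}\to\{1,\dots,k\}$.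
   Context: Precoloring Extension: given a graph $H=(V,F)$, an integer $k$, and a proper coloring $\chi:V_0\to\{1,\dots,k\}$ of $H[V_0]$ for some $V_0\subseteq V$, a solution is a proper coloring $\chi':V\to\{1,\dots,k\}$ of $H$ with $\chi'(v)=\chi(v)$ for all $v\in V_0$. In $P_n\,|\,\mathrm{conc}\,|\,C_{\max}$, each job $j$ has integer processing time $p_j\ge1$ and release time $0$, and there is a conflict graph $G$; a schedule $C$ assigning each job a completion time $C_j\in\mathbb{N}$ is feasible if $C_j-p_j\ge0$ for all $j$ and $[C_i-p_i,C_i)\cap[C_j-p_j,C_j)=\emptyset$ for all edges $\{i,j\}$ of $G$; $C_{\max}=\max_j C_j$. *)

theory Defs
  imports Main
begin

definition simple_graph_on :: "nat set \<Rightarrow> nat set set \<Rightarrow> bool" where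
  "simple_graph_on V F \<longleftrightarrow> (\<forall>e\<in>F. e \<subseteq> V \<and> card e = 2)"

definition proper_precoloring ::
  "nat set set \<Rightarrow> nat \<Rightarrow> nat set \<Rightarrow> (nat \<Rightarrow> nat) \<Rightarrow> bool" where
  "proper_precoloring F k V0 \<chi> \<longleftrightarrow>
     (\<forall>v\<in>V0. \<chi> v \<in> {1..k}) \<and>
     (\<forall>u v. {u, v} \<in> F \<longrightarrow> u \<in> V0 \<longrightarrow> v \<in> V0 \<longrightarrow> \<chi> u \<noteq> \<chi> v)"

definition pe_solution ::
  "nat set \<Rightarrow> nat set set \<Rightarrow> nat \<Rightarrow> nat set \<Rightarrow> (nat \<Rightarrow> nat) \<Rightarrow> (nat \<Rightarrow> nat) \<Rightarrow> bool" where
  "pe_solution V F k V0 \<chi> \<chi>' \<longleftrightarrow>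
     (\<forall>v\<in>V. \<chi>' v \<in> {1..k}) \<and>
     (\<forall>u v. {u, v} \<in> F \<longrightarrow> \<chi>' u \<noteq> \<chi>' v) \<and>
     (\<forall>v\<in>V0. \<chi>' v = \<chi> v)"

datatype job = Orig nat | JA | JB | JA' | JB' | J1 nat | J2 nat

definition mid_col :: "nat \<Rightarrow> nat \<Rightarrow> bool" where
  "mid_col k c \<longleftrightarrow> 2 \<le> c \<and> c \<le> k - 1"

definition red_jobs :: "nat \<Rightarrow> nat \<Rightarrow> nat set \<Rightarrow> (nat \<Rightarrow> nat) \<Rightarrow> job set" where
  "red_jobs n k V0 \<chi> =
     Orig ` {1..n} \<union> {JA, JB, JA', JB'}
     \<union> J1 ` {j \<in> V0. mid_col k (\<chi> j) \<or> \<chi> j = k}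
     \<union> J2 ` {j \<in> V0. mid_col k (\<chi> j) \<or> \<chi> j = 1}"

fun red_p :: "nat \<Rightarrow> (nat \<Rightarrow> nat) \<Rightarrow> job \<Rightarrow> nat" where
  "red_p k \<chi> (Orig j) = 1"
| "red_p k \<chi> JA = 1"
| "red_p k \<chi> JB = 1"
| "red_p k \<chi> JA' = k - 1"
| "red_p k \<chi> JB' = k - 1"
| "red_p k \<chi> (J1 j) = (if \<chi> j = k then k - 1 else \<chi> j - 1)"
| "red_p k \<chi> (J2 j) = (if \<chi> j = 1 then k - 1 else k - \<chi> j)"

definition red_G :: "nat set set \<Rightarrow> nat \<Rightarrow> nat set \<Rightarrow> (nat \<Rightarrow> nat) \<Rightarrow> job set set" where
  "red_G F k V0 \<chi> =
     {{Orig u, Orig v} | u v. {u, v} \<in> F}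
     \<union> {{JA, JA'}, {JB, JB'}, {JA, JB}}
     \<union> (\<Union>j \<in> {j \<in> V0. mid_col k (\<chi> j)}.
          {{Orig j, J1 j}, {Orig j, J2 j}, {J1 j, J2 j}, {JA, Orig j}, {JB, Orig j},
           {JA, J2 j}, {JB, J1 j}})
     \<union> (\<Union>j \<in> {j \<in> V0. \<chi> j = 1}. {{Orig j, J2 j}, {JB, Orig j}, {JA, J2 j}})
     \<union> (\<Union>j \<in> {j \<in> V0. \<chi> j = k}. {{Orig j, J1 j}, {JA, Orig j}, {JB, J1 j}})"

definition feasible_schedule ::
  "'j set \<Rightarrow> ('j \<Rightarrow> nat) \<Rightarrow> 'j set set \<Rightarrow> ('j \<Rightarrow> nat) \<Rightarrow> bool" where
  "feasible_schedule J p G C \<longleftrightarrow>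
     (\<forall>j\<in>J. p j \<le> C j) \<and>
     (\<forall>i j. {i, j} \<in> G \<longrightarrow> i \<noteq> j \<longrightarrow> {C i - p i ..< C i} \<inter> {C j - p j ..< C j} = {})"

definition Cmax :: "'j set \<Rightarrow> ('j \<Rightarrow> nat) \<Rightarrow> nat" where
  "Cmax J C = Max (C ` J)"

end

theory Submission
  imports Defs
begin

(* Jobs a and b each conflict with a job of length k - 1, so in a schedule of makespan at most k
   each of them runs in the first or the last time slot, and as they conflict with each other they
   take both. Up to reflecting time (slot t becomes k + 1 - t) a runs first, and then the slots of
   the vertex jobs form a proper coloring. The gadget of a precolored vertex j pins its job to slot
   chi(j): for chi(j) = 1 (resp. k) the gadget job of length k - 1 conflicts with a (resp. b), so it
   fills every slot except that of a (resp. b), which is then the only one left for j. For a middle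
   color the jobs j, j(1), j(2) have total length k, j avoids the first and last slot, j(2) the
   first and j(1) the last; this forces the order j(1), j, j(2), so j runs in slot chi(j). *)

definition non_overlapping :: "nat \<Rightarrow> nat \<Rightarrow> nat \<Rightarrow> nat \<Rightarrow> bool" where
  "non_overlapping c p d q \<longleftrightarrow> c + q \<le> d \<or> d + p \<le> c"

lemma non_overlapping_commute: "non_overlapping c p d q \<longleftrightarrow> non_overlapping d q c p"
  unfolding non_overlapping_def by auto

lemma disjoint_intervals_non_overlapping:
  fixes c d p q :: nat
  assumes "{c - p..<c} \<inter> {d - q..<d} = {}" "0 < p" "0 < q" "p \<le> c" "q \<le> d"
  shows "non_overlapping c p d q"
proof (rule ccontr)
  assume "\<not> non_overlapping c p d q"
  then have "max (c - p) (d - q) \<in> {c - p..<c} \<inter> {d - q..<d}"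
    using assms(2-) unfolding non_overlapping_def by auto
  with assms(1) show False by blast
qed

lemma feasible_schedule_non_overlapping:
  assumes "feasible_schedule J p G C" "{i, j} \<in> G" "i \<noteq> j" "i \<in> J" "j \<in> J"
    and "0 < p i" "0 < p j"
  shows "non_overlapping (C i) (p i) (C j) (p j)"
proof (rule disjoint_intervals_non_overlapping)
  show "{C i - p i..<C i} \<inter> {C j - p j..<C j} = {}" "p i \<le> C i" "p j \<le> C j"
    using assms(1-5) unfolding feasible_schedule_def by blast+
qed (use assms in auto)

lemma le_Cmax: "finite J \<Longrightarrow> j \<in> J \<Longrightarrow> C j \<le> Cmax J C"
  unfolding Cmax_def by simp

lemma unit_job_beside_long_job:
  fixes x z k :: nat
  assumes "1 \<le> x" "x \<le> k" "k - 1 \<le> z" "z \<le> k" "non_overlapping x 1 z (k - 1)"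
  shows "x = 1 \<or> x = k"
  using assms unfolding non_overlapping_def by linarith

lemma end_gadget_slot:
  fixes x z e k :: nat
  assumes "e = 1 \<or> e = k" "1 \<le> x" "x \<le> k" "k - 1 \<le> z" "z \<le> k"
    and "non_overlapping x 1 z (k - 1)" "non_overlapping e 1 z (k - 1)"
  shows "x = e"
  using assms unfolding non_overlapping_def by linarith

lemma middle_gadget_slot:
  fixes x y z p q k :: nat
  assumes k: "k = p + q + 1" and "0 < p" "0 < q"
    and bounds: "1 \<le> x" "x \<le> k" "p \<le> y" "y \<le> k" "q \<le> z" "z \<le> k"
    and xy: "non_overlapping x 1 y p" and xz: "non_overlapping x 1 z q"
    and yz: "non_overlapping y p z q"
    and first_x: "non_overlapping 1 1 x 1" and first_z: "non_overlapping 1 1 z q"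
    and last_x: "non_overlapping k 1 x 1" and last_y: "non_overlapping k 1 y p"
  shows "x = p + 1"
proof -
  have "2 \<le> x" "x + 1 \<le> k" using first_x last_x bounds unfolding non_overlapping_def by auto
  moreover have "1 + q \<le> z" "y + 1 \<le> k"
    using first_z last_y bounds \<open>0 < p\<close> \<open>0 < q\<close> unfolding non_overlapping_def by auto
  ultimately have "y + q \<le> z" using yz k unfolding non_overlapping_def by linarith
  with \<open>2 \<le> x\<close> \<open>x + 1 \<le> k\<close> have "y + 1 \<le> x" "x + q \<le> z"
    using xy xz bounds k unfolding non_overlapping_def by linarith+
  then show ?thesis using bounds k by linarith
qed

lemma red_G_edge_subset_red_jobs:
  assumes "simple_graph_on {1..n} F" "V0 \<subseteq> {1..n}" "e \<in> red_G F k V0 \<chi>"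
  shows "e \<subseteq> red_jobs n k V0 \<chi>"
proof -
  have F: "{u, v} \<subseteq> {1..n}" if "{u, v} \<in> F" for u v
    using assms(1) that unfolding simple_graph_on_def by blast
  have V0: "j \<in> {1..n}" if "j \<in> V0" for j using assms(2) that by blast
  from assms(3) show ?thesis
    unfolding red_G_def
  proof (elim UnE)
  qed (use F V0 in \<open>auto simp: red_jobs_def mid_col_def\<close>)
qed

lemma red_p_pos: "2 \<le> k \<Longrightarrow> j \<in> red_jobs n k V0 \<chi> \<Longrightarrow> 0 < red_p k \<chi> j"
  unfolding red_jobs_def mid_col_def by auto

lemma red_G_Orig: "{u, v} \<in> F \<Longrightarrow> {Orig u, Orig v} \<in> red_G F k V0 \<chi>"
  unfolding red_G_def by (intro UnI1) blast

lemma red_G_anchors: "{{JA, JA'}, {JB, JB'}, {JA, JB}} \<subseteq> red_G F k V0 \<chi>"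
  unfolding red_G_def by simp

lemma red_G_low_gadget:
  "j \<in> V0 \<Longrightarrow> \<chi> j = 1 \<Longrightarrow> {{Orig j, J2 j}, {JB, Orig j}, {JA, J2 j}} \<subseteq> red_G F k V0 \<chi>"
  unfolding red_G_def by (rule subset_trans[OF UN_upper subset_trans[OF Un_upper2 Un_upper1]]) simp

lemma red_G_high_gadget:
  "j \<in> V0 \<Longrightarrow> \<chi> j = k \<Longrightarrow> {{Orig j, J1 j}, {JA, Orig j}, {JB, J1 j}} \<subseteq> red_G F k V0 \<chi>"
  unfolding red_G_def by (rule subset_trans[OF UN_upper Un_upper2]) simp

lemma red_G_middle_gadget:
  "j \<in> V0 \<Longrightarrow> mid_col k (\<chi> j) \<Longrightarrow>
    {{Orig j, J1 j}, {Orig j, J2 j}, {J1 j, J2 j}, {JA, Orig j}, {JB, Orig j},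
     {JA, J2 j}, {JB, J1 j}} \<subseteq> red_G F k V0 \<chi>"
  unfolding red_G_def
  by (rule subset_trans[OF UN_upper subset_trans[OF Un_upper2 subset_trans[OF Un_upper1 Un_upper1]]])
    simp

locale reduction_schedule =
  fixes n k :: nat and F :: "nat set set" and V0 :: "nat set" and \<chi> :: "nat \<Rightarrow> nat"
    and C :: "job \<Rightarrow> nat"
  assumes graph: "simple_graph_on {1..n} F"
    and edge: "F \<noteq> {}"
    and V0: "V0 \<subseteq> {1..n}"
    and precoloring: "proper_precoloring F k V0 \<chi>"
    and feasible: "feasible_schedule (red_jobs n k V0 \<chi>) (red_p k \<chi>) (red_G F k V0 \<chi>) C"
    and makespan: "Cmax (red_jobs n k V0 \<chi>) C \<le> k"
begin

lemma completion_time_bounds: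
  assumes "j \<in> red_jobs n k V0 \<chi>"
  shows "red_p k \<chi> j \<le> C j" "C j \<le> k"
proof -
  show "red_p k \<chi> j \<le> C j" using feasible assms unfolding feasible_schedule_def by blast
  have "finite V0" using V0 finite_subset by blast
  then have "finite (red_jobs n k V0 \<chi>)" unfolding red_jobs_def by simp
  then have "C j \<le> Cmax (red_jobs n k V0 \<chi>) C" using assms by (rule le_Cmax)
  with makespan show "C j \<le> k" by linarith
qed

lemma Orig_bounds: "v \<in> {1..n} \<Longrightarrow> 1 \<le> C (Orig v) \<and> C (Orig v) \<le> k"
  using completion_time_bounds[of "Orig v"] unfolding red_jobs_def by simp

lemma adjacent_Orig_apart:
  assumes "{u, v} \<in> F"
  shows "u \<in> {1..n}" "v \<in> {1..n}" "C (Orig u) \<noteq> C (Orig v)"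
proof -
  have "{u, v} \<subseteq> {1..n}" "card {u, v} = 2"
    using graph assms unfolding simple_graph_on_def by auto
  then show uv: "u \<in> {1..n}" "v \<in> {1..n}" by auto
  from \<open>card {u, v} = 2\<close> have "u \<noteq> v" by (cases "u = v") auto
  with assms uv have "non_overlapping (C (Orig u)) 1 (C (Orig v)) 1"
    using feasible_schedule_non_overlapping[OF feasible red_G_Orig] unfolding red_jobs_def by simp
  then show "C (Orig u) \<noteq> C (Orig v)" unfolding non_overlapping_def by auto
qed

lemma two_le_k: "2 \<le> k"
proof -
  obtain e where "e \<in> F" using edge by blast
  moreover from this have "card e = 2" using graph unfolding simple_graph_on_def by blast
  then obtain u v where "e = {u, v}" by (auto simp: card_2_iff)
  ultimately have uv: "{u, v} \<in> F" by simp
  show ?thesis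
    using adjacent_Orig_apart[OF uv] Orig_bounds[of u] Orig_bounds[of v] by linarith
qed

lemma conflict_non_overlapping:
  assumes "{i, j} \<in> red_G F k V0 \<chi>" "i \<noteq> j"
  shows "non_overlapping (C i) (red_p k \<chi> i) (C j) (red_p k \<chi> j)"
proof -
  have "i \<in> red_jobs n k V0 \<chi>" "j \<in> red_jobs n k V0 \<chi>"
    using red_G_edge_subset_red_jobs[OF graph V0 assms(1)] by auto
  then show ?thesis
    using feasible_schedule_non_overlapping[OF feasible assms] red_p_pos[OF two_le_k] by simp
qed

lemma anchor_slots: "(C JA = 1 \<and> C JB = k) \<or> (C JA = k \<and> C JB = 1)"
proof -
  have "JA \<in> red_jobs n k V0 \<chi>" "JB \<in> red_jobs n k V0 \<chi>"
    "JA' \<in> red_jobs n k V0 \<chi>" "JB' \<in> red_jobs n k V0 \<chi>"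
    unfolding red_jobs_def by simp_all
  note bounds = this[THEN completion_time_bounds(1)] this[THEN completion_time_bounds(2)]
  have "C JA = 1 \<or> C JA = k"
    using bounds conflict_non_overlapping[of JA JA'] red_G_anchors
    by (intro unit_job_beside_long_job[of _ k "C JA'"]) simp_all
  moreover have "C JB = 1 \<or> C JB = k"
    using bounds conflict_non_overlapping[of JB JB'] red_G_anchors
    by (intro unit_job_beside_long_job[of _ k "C JB'"]) simp_all
  moreover have "C JA \<noteq> C JB"
    using conflict_non_overlapping[of JA JB] red_G_anchors unfolding non_overlapping_def by auto
  ultimately show ?thesis by auto
qed

lemma low_precolored_slot:
  assumes j: "j \<in> V0" and low: "\<chi> j = 1"
  shows "C (Orig j) = C JA"
proof -
  have x: "1 \<le> C (Orig j)" "C (Orig j) \<le> k" using Orig_bounds j V0 by blast+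
  have "J2 j \<in> red_jobs n k V0 \<chi>" using j low unfolding red_jobs_def by simp
  note z = completion_time_bounds[OF this]
  have "{Orig j, J2 j} \<in> red_G F k V0 \<chi>" "{JA, J2 j} \<in> red_G F k V0 \<chi>"
    using red_G_low_gadget[where \<chi> = \<chi>, OF j low] by simp_all
  note ov = this[THEN conflict_non_overlapping, simplified low]
  show ?thesis
    using end_gadget_slot[where e = "C JA" and x = "C (Orig j)" and z = "C (J2 j)"]
      anchor_slots x z ov low by auto
qed

lemma high_precolored_slot:
  assumes j: "j \<in> V0" and high: "\<chi> j = k"
  shows "C (Orig j) = C JB"
proof -
  have x: "1 \<le> C (Orig j)" "C (Orig j) \<le> k" using Orig_bounds j V0 by blast+
  have "J1 j \<in> red_jobs n k V0 \<chi>" using j high unfolding red_jobs_def by simp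
  note z = completion_time_bounds[OF this]
  have "{Orig j, J1 j} \<in> red_G F k V0 \<chi>" "{JB, J1 j} \<in> red_G F k V0 \<chi>"
    using red_G_high_gadget[where \<chi> = \<chi>, OF j high] by simp_all
  note ov = this[THEN conflict_non_overlapping, simplified high]
  show ?thesis
    using end_gadget_slot[where e = "C JB" and x = "C (Orig j)" and z = "C (J1 j)"]
      anchor_slots x z ov high by auto
qed

lemma middle_precolored_slot:
  assumes j: "j \<in> V0" and middle: "mid_col k (\<chi> j)"
  shows "C (Orig j) = (if C JA = 1 then \<chi> j else k + 1 - \<chi> j)"
proof -
  have x: "1 \<le> C (Orig j)" "C (Orig j) \<le> k" using Orig_bounds j V0 by blast+
  from middle have "\<chi> j \<noteq> 1" "\<chi> j \<noteq> k" and q: "0 < \<chi> j - 1" "0 < k - \<chi> j"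
    using two_le_k unfolding mid_col_def by auto
  have "J1 j \<in> red_jobs n k V0 \<chi>" "J2 j \<in> red_jobs n k V0 \<chi>"
    using j middle unfolding red_jobs_def by simp_all
  note y = completion_time_bounds[OF this(1)] and z = completion_time_bounds[OF this(2)]
  have "{Orig j, J1 j} \<in> red_G F k V0 \<chi>" "{Orig j, J2 j} \<in> red_G F k V0 \<chi>"
    "{J1 j, J2 j} \<in> red_G F k V0 \<chi>" "{JA, Orig j} \<in> red_G F k V0 \<chi>"
    "{JB, Orig j} \<in> red_G F k V0 \<chi>" "{JA, J2 j} \<in> red_G F k V0 \<chi>"
    "{JB, J1 j} \<in> red_G F k V0 \<chi>"
    using red_G_middle_gadget[where \<chi> = \<chi>, OF j middle] by simp_all
  note ov = this[THEN conflict_non_overlapping, simplified \<open>\<chi> j \<noteq> 1\<close> \<open>\<chi> j \<noteq> k\<close>]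
  from anchor_slots show ?thesis
  proof (elim disjE conjE)
    assume "C JA = 1" "C JB = k"
    have "C (Orig j) = (\<chi> j - 1) + 1"
      by (rule middle_gadget_slot[where y = "C (J1 j)" and z = "C (J2 j)" and k = k])
        (use x y z q ov middle \<open>C JA = 1\<close> \<open>C JB = k\<close> in \<open>simp_all add: mid_col_def\<close>)
    with \<open>C JA = 1\<close> q show ?thesis by simp
  next
    assume "C JA = k" "C JB = 1"
    have "C (Orig j) = (k - \<chi> j) + 1"
      by (rule middle_gadget_slot[where y = "C (J2 j)" and z = "C (J1 j)" and k = k])
        (use x y z q ov middle \<open>C JA = k\<close> \<open>C JB = 1\<close> in
          \<open>simp_all add: mid_col_def non_overlapping_commute\<close>)
    with \<open>C JA = k\<close> q two_le_k show ?thesis by simp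
  qed
qed

lemma precolored_slot:
  assumes j: "j \<in> V0"
  shows "C (Orig j) = (if C JA = 1 then \<chi> j else k + 1 - \<chi> j)"
proof -
  have "\<chi> j \<in> {1..k}" using precoloring j unfolding proper_precoloring_def by blast
  then consider (low) "\<chi> j = 1" | (high) "\<chi> j = k" | (middle) "mid_col k (\<chi> j)"
    unfolding mid_col_def by fastforce
  then show ?thesis
  proof cases
    case low
    with low_precolored_slot[OF j] anchor_slots show ?thesis by auto
  next
    case high
    with high_precolored_slot[OF j] anchor_slots show ?thesis by auto
  next
    case middle
    with middle_precolored_slot[OF j] show ?thesis .
  qed
qed

end

theorem lemma10:
  fixes n k :: nat and F :: "nat set set" and V0 :: "nat set" and \<chi> :: "nat \<Rightarrow> nat"
    and C :: "job \<Rightarrow> nat"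
  assumes "simple_graph_on {1..n} F"
    and "F \<noteq> {}"
    and "V0 \<subseteq> {1..n}"
    and "proper_precoloring F k V0 \<chi>"
    and "feasible_schedule (red_jobs n k V0 \<chi>) (red_p k \<chi>) (red_G F k V0 \<chi>) C"
    and "Cmax (red_jobs n k V0 \<chi>) C \<le> k"
  shows "\<exists>\<chi>'. pe_solution {1..n} F k V0 \<chi> \<chi>'"
proof -
  interpret reduction_schedule n k F V0 \<chi> C
    using assms by unfold_locales
  define \<chi>' where "\<chi>' v = (if C JA = 1 then C (Orig v) else k + 1 - C (Orig v))" for v
  have "\<chi>' v \<in> {1..k}" if "v \<in> {1..n}" for v
    using Orig_bounds[OF that] unfolding \<chi>'_def by auto
  moreover have "\<chi>' u \<noteq> \<chi>' v" if "{u, v} \<in> F" for u v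
    using adjacent_Orig_apart[OF that] Orig_bounds[of u] Orig_bounds[of v]
    unfolding \<chi>'_def by auto
  moreover have "\<chi>' j = \<chi> j" if "j \<in> V0" for j
    using precolored_slot[OF that] precoloring that
    unfolding \<chi>'_def proper_precoloring_def by auto
  ultimately show ?thesis unfolding pe_solution_def by blast
qed

end
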